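(* Let $n\ge2$ be an integer. Then Hypothesis C holds for $\mathbf{GL}_n$: for every quasicharacter $\phi$ of $G=\mathbf{GL}_n(F)$ of positive depth $r$ and every $x\in\mathscr B(\mathbf{GL}_n,F)$, the restriction $\phi|_{G_{x,(r/2)^+}}$ is realized by an element of $\mathfrak z^*_{-r}$.
   Context: $F$ is a nonarchimedean local field of odd residual characteristic, valuation normalized by $v_F(F^\times)=\mathbb Z$, $\mathfrak O_F,\mathfrak P_F$ its integers and maximal ideal, $\psi$ a fixed character of $F$ trivial on $\mathfrak P_F$ and nontrivial on $\mathfrak O_F$. $G_{x,t}$, $\mathfrak g_{x,t}$ are Moy–Prasad subgroups and lattices, $G_{x,t^+}=\bigcup_{s>t}G_{x,s}$, $\mathfrak g^*_{x,t}=\{\lambda\in\mathfrak g^*:\lambda(\mathfrak g_{x,(-t)^+})\subset\mathfrak P_F\}$, $\mathfrak g^*_t=\bigcup_x\mathfrak g^*_{x,t}$; $\mathfrak z^*$ is the dual of the centre of $\mathfrak g$, viewed as the $\mathrm{Ad}^*G$-fixed elements of $\mathfrak g^*$ (the functionals $X\mapsto\beta\operatorname{tr}X$), and $\mathfrak z^*_t=\mathfrak z^*\cap\mathfrak g^*_t$. The depth of a quasicharacter $\phi$ is the least $r\ge0$ with $\phi|_{G_{x,r^+}}=1$ for some (equivalently all) $x$. For $r>0$, $e:\mathfrak g_{x,(r/2)^+}/\mathfrak g_{x,r^+}\to G_{x,(r/2)^+}/G_{x,r^+}$ is Yu's canonical (Moy–Prasad) isomorphism; $\phi|_{G_{x,(r/2)^+}}$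 is realized by $X^*\in\mathfrak g^*$ if $\phi(e(Y+\mathfrak g_{x,r^+}))=\psi(X^*(Y))$ for all $Y\in\mathfrak g_{x,(r/2)^+}$. *)

theory Defs
  imports "HOL-Analysis.Analysis"
begin

definition disc_val :: "('a::field \<Rightarrow> ereal) \<Rightarrow> bool" where
  "disc_val v \<longleftrightarrow>
     (\<forall>x. v x = \<infinity> \<longleftrightarrow> x = 0) \<and>
     (\<forall>x. x \<noteq> 0 \<longrightarrow> (\<exists>k::int. v x = ereal (of_int k))) \<and>
     (\<forall>k::int. \<exists>x. v x = ereal (of_int k)) \<and>
     (\<forall>x y. v (x * y) = v x + v y) \<and>
     (\<forall>x y. min (v x) (v y) \<le> v (x + y))"

text \<open>Nonarchimedean local field: complete discretely valued field with finite residue field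
  O_F / P_F.  Odd residual characteristic: 2 is a unit of O_F, i.e. v 2 = 0.\<close>

definition nonarch_local_field_odd :: "('a::field \<Rightarrow> ereal) \<Rightarrow> bool" where
  "nonarch_local_field_odd v \<longleftrightarrow>
     disc_val v \<and>
     (\<forall>a::nat \<Rightarrow> 'a. (\<forall>k::int. \<exists>N. \<forall>m\<ge>N. \<forall>n\<ge>N. ereal (of_int k) \<le> v (a m - a n)) \<longrightarrow>
        (\<exists>L. \<forall>k::int. \<exists>N. \<forall>m\<ge>N. ereal (of_int k) \<le> v (a m - L))) \<and>
     (\<exists>S. finite S \<and> S \<subseteq> {a. 0 \<le> v a} \<and> (\<forall>a. 0 \<le> v a \<longrightarrow> (\<exists>s\<in>S. 1 \<le> v (a - s)))) \<and>
     v (1 + 1) = 0"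

definition std_add_char :: "('a::field \<Rightarrow> ereal) \<Rightarrow> ('a \<Rightarrow> complex) \<Rightarrow> bool" where
  "std_add_char v \<psi> \<longleftrightarrow>
     (\<forall>a b. \<psi> (a + b) = \<psi> a * \<psi> b) \<and> (\<forall>a. cmod (\<psi> a) = 1) \<and>
     (\<forall>a. 1 \<le> v a \<longrightarrow> \<psi> a = 1) \<and> (\<exists>a. 0 \<le> v a \<and> \<psi> a \<noteq> 1)"

text \<open>Points of the (extended) building of GL_n(F), Goldman--Iwahori: splittable additive norms
  on F^n, i.e. alpha(g c) = min_i (v(c_i) + s_i) for some basis (columns of g) and reals s_i.\<close>

definition building :: "('a::field \<Rightarrow> ereal) \<Rightarrow> ('a^'n::finite \<Rightarrow> ereal) set" where
  "building v = {\<alpha>. \<exists>(g::'a^'n^'n) (s::'n \<Rightarrow> real). invertible g \<and>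
        (\<forall>c. \<alpha> (g *v c) = (MIN i. v (c $ i) + ereal (s i)))}"

definition lie_filt :: "('a::field^'n::finite \<Rightarrow> ereal) \<Rightarrow> real \<Rightarrow> ('a^'n^'n) set" where
  "lie_filt \<alpha> t = {X. \<forall>u. \<alpha> u + ereal t \<le> \<alpha> (X *v u)}"

definition lie_filt_plus :: "('a::field^'n::finite \<Rightarrow> ereal) \<Rightarrow> real \<Rightarrow> ('a^'n^'n) set" where
  "lie_filt_plus \<alpha> t = (\<Union>s\<in>{s. t < s}. lie_filt \<alpha> s)"

definition grp_filt :: "('a::field^'n::finite \<Rightarrow> ereal) \<Rightarrow> real \<Rightarrow> ('a^'n^'n) set" where
  "grp_filt \<alpha> t = {g. invertible g \<and> g - mat 1 \<in> lie_filt \<alpha> t}"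

definition grp_filt_plus :: "('a::field^'n::finite \<Rightarrow> ereal) \<Rightarrow> real \<Rightarrow> ('a^'n^'n) set" where
  "grp_filt_plus \<alpha> t = (\<Union>s\<in>{s. t < s}. grp_filt \<alpha> s)"

text \<open>Quasicharacter of GL_n(F): continuous homomorphism GL_n(F) -> C^x
  (continuity of a homomorphism = continuity at the identity, for the v-adic topology).\<close>

definition quasichar :: "('a::field \<Rightarrow> ereal) \<Rightarrow> ('a^'n::finite^'n \<Rightarrow> complex) \<Rightarrow> bool" where
  "quasichar v \<phi> \<longleftrightarrow>
     (\<forall>g h. invertible g \<and> invertible h \<longrightarrow> \<phi> (g ** h) = \<phi> g * \<phi> h) \<and>
     (\<forall>g. invertible g \<longrightarrow> \<phi> g \<noteq> 0) \<and>
     (\<forall>\<epsilon>>0. \<exists>m::int. \<forall>g. invertible g \<and> (\<forall>i j. ereal (of_int m) \<le> v (g $ i $ j - mat 1 $ i $ j))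
          \<longrightarrow> cmod (\<phi> g - 1) < \<epsilon>)"

definition has_depth :: "('a::field \<Rightarrow> ereal) \<Rightarrow> ('a^'n::finite^'n \<Rightarrow> complex) \<Rightarrow> real \<Rightarrow> bool" where
  "has_depth v \<phi> r \<longleftrightarrow> 0 \<le> r \<and>
     (\<exists>\<alpha>\<in>building v. \<forall>g\<in>grp_filt_plus \<alpha> r. \<phi> g = 1) \<and>
     (\<forall>s. 0 \<le> s \<and> s < r \<longrightarrow> \<not> (\<exists>\<alpha>\<in>building v. \<forall>g\<in>grp_filt_plus \<alpha> s. \<phi> g = 1))"

definition dual_filt :: "('a::field \<Rightarrow> ereal) \<Rightarrow> ('a^'n::finite \<Rightarrow> ereal) \<Rightarrow> real
    \<Rightarrow> ('a^'n^'n \<Rightarrow> 'a) set" where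
  "dual_filt v \<alpha> t = {l. \<forall>Y\<in>lie_filt_plus \<alpha> (- t). 1 \<le> v (l Y)}"

definition dual_depth :: "('a::field \<Rightarrow> ereal) \<Rightarrow> real \<Rightarrow> ('a^'n::finite^'n \<Rightarrow> 'a) set" where
  "dual_depth v t = (\<Union>\<alpha>\<in>building v. dual_filt v \<alpha> t)"

definition centre_dual :: "('a::field^'n::finite^'n \<Rightarrow> 'a) set" where
  "centre_dual = {l. \<exists>\<beta>. l = (\<lambda>X. \<beta> * trace X)}"

text \<open>phi restricted to G_{x,(r/2)+} is realized by lambda: phi(e(Y + g_{x,r+})) = psi(lambda Y),
  where for GL_n the Moy--Prasad isomorphism is e(Y + g_{x,r+}) = (1 + Y) G_{x,r+}.\<close>

definition realizes :: "('a::field \<Rightarrow> complex) \<Rightarrow> ('a^'n::finite^'n \<Rightarrow> complex) \<Rightarrow> ('a^'n \<Rightarrow> ereal)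
    \<Rightarrow> real \<Rightarrow> ('a^'n^'n \<Rightarrow> 'a) \<Rightarrow> bool" where
  "realizes \<psi> \<phi> \<alpha> r l \<longleftrightarrow> (\<forall>Y\<in>lie_filt_plus \<alpha> (r / 2). \<phi> (mat 1 + Y) = \<psi> (l Y))"

end

theory Submission
  imports Defs
begin

text \<open>Transvections are conjugate to their squares by diagonal matrices (\<open>2\<close> being a unit), so a
  quasicharacter \<open>\<phi>\<close> is trivial on them and, by Gaussian elimination, factors as \<open>\<phi> = \<chi> \<circ> det\<close>.
  Depth \<open>r\<close> makes \<open>u \<mapsto> \<chi>(1 + u)\<close> trivial on \<open>P\<^sub>r\<^sub>+\<close> and additive on \<open>P\<^sub>(\<^sub>r\<^sub>/\<^sub>2\<^sub>)\<^sub>+\<close>, so by the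
  self-duality of the finite residue field under \<open>\<psi>\<close> it equals \<open>\<psi>(\<beta> u)\<close> with \<open>\<beta> \<in> P\<^bsup>-\<lfloor>r\<rfloor>\<^esup>\<close>.
  For \<open>Y \<in> \<g>\<^sub>x\<^sub>,\<^sub>(\<^sub>r\<^sub>/\<^sub>2\<^sub>)\<^sub>+\<close> one has \<open>det (1 + Y) \<equiv> 1 + tr Y\<close> modulo \<open>P\<^sub>r\<^sub>+\<close>, hence
  \<open>\<phi>(1 + Y) = \<psi>(\<beta> tr Y)\<close>: the central functional \<open>X \<mapsto> \<beta> tr X\<close> realizes \<open>\<phi>\<close>.\<close>

lemma ereal_le_add_shift: "ereal a \<le> x \<Longrightarrow> x \<noteq> -\<infinity> \<Longrightarrow> ereal c \<le> x + ereal (c - a)"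
  by (cases x) auto

lemma ereal_le_minus_shift: "(x::ereal) \<noteq> -\<infinity> \<Longrightarrow> ereal b \<le> x + ereal a \<Longrightarrow> ereal (b - a) \<le> x"
  by (cases x) auto

locale discrete_valuation =
  fixes v :: "'a::field \<Rightarrow> ereal"
  assumes disc_val: "disc_val v"
begin

lemma val_eq_infinity_iff [simp]: "v x = \<infinity> \<longleftrightarrow> x = 0"
  using disc_val unfolding disc_val_def by (elim conjE) (rule spec)

lemma val_integer: "x \<noteq> 0 \<Longrightarrow> \<exists>k::int. v x = ereal (of_int k)"
  using disc_val unfolding disc_val_def by (elim conjE) simp

lemma val_surj: "\<exists>x. v x = ereal (of_int k)"
  using disc_val unfolding disc_val_def by (elim conjE) simp

lemma val_mult: "v (x * y) = v x + v y"
  using disc_val unfolding disc_val_def by (elim conjE) simp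

lemma val_add: "min (v x) (v y) \<le> v (x + y)"
  using disc_val unfolding disc_val_def by (elim conjE) simp

lemma val_zero [simp]: "v 0 = \<infinity>"
  by simp

lemma val_not_minf: "v x \<noteq> -\<infinity>"
  by (cases "x = 0") (auto dest!: val_integer)

lemma val_one [simp]: "v 1 = 0"
proof -
  obtain k :: int where k: "v 1 = ereal k" using val_integer[of 1] by auto
  have "v 1 = v 1 + v 1" using val_mult[of 1 1] by simp
  with k show ?thesis by (simp add: zero_ereal_def)
qed

lemma val_minus_one [simp]: "v (-1) = 0"
proof -
  obtain k :: int where k: "v (-1) = ereal k" using val_integer[of "-1"] by auto
  have "v (-1) + v (-1) = 0" using val_mult[of "-1" "-1"] by simp
  with k show ?thesis by (simp add: zero_ereal_def)
qed

lemma val_minus [simp]: "v (- x) = v x"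
  using val_mult[of "-1" x] by simp

lemma val_add_ge: "B \<le> v x \<Longrightarrow> B \<le> v y \<Longrightarrow> B \<le> v (x + y)"
  by (meson min.bounded_iff order_trans val_add)

lemma val_diff_ge: "B \<le> v x \<Longrightarrow> B \<le> v y \<Longrightarrow> B \<le> v (x - y)"
  using val_add_ge[of B x "- y"] by simp

lemma val_sum_ge: "finite A \<Longrightarrow> (\<And>i. i \<in> A \<Longrightarrow> B \<le> v (f i)) \<Longrightarrow> B \<le> v (sum f A)"
  by (induction A rule: finite_induct) (auto intro: val_add_ge)

lemma val_prod_ge:
  "finite A \<Longrightarrow> (\<And>i. i \<in> A \<Longrightarrow> ereal (c i) \<le> v (f i)) \<Longrightarrow> ereal (sum c A) \<le> v (prod f A)"
proof (induction A rule: finite_induct)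
  case (insert a A)
  have "ereal (c a) + ereal (sum c A) \<le> v (f a) + v (prod f A)"
    using insert by (intro add_mono) auto
  with insert show ?case by (simp add: val_mult)
qed simp

lemma val_power: "v x = ereal c \<Longrightarrow> v (x ^ n) = ereal (real n * c)"
  by (induction n) (simp_all add: val_mult algebra_simps zero_ereal_def)

lemma val_inverse: "x \<noteq> 0 \<Longrightarrow> v (inverse x) = - v x"
  using val_mult[of x "inverse x"] val_integer[of x] val_integer[of "inverse x"]
  by (auto simp: zero_ereal_def)

lemma val_gt_imp_ge_floor_plus_one: "ereal t < v x \<Longrightarrow> ereal (of_int (\<lfloor>t\<rfloor> + 1)) \<le> v x"
proof (cases "x = 0")
  case False
  then obtain k :: int where k: "v x = ereal k" using val_integer by blast
  moreover assume "ereal t < v x"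
  ultimately have "\<lfloor>t\<rfloor> + 1 \<le> k" by simp linarith
  with k show ?thesis by simp
qed simp

lemma val_nonneg_less_one: "0 \<le> v x \<Longrightarrow> \<not> 1 \<le> v x \<Longrightarrow> v x = 0"
  using val_integer[of x] by (cases "x = 0") (auto simp: zero_ereal_def one_ereal_def)

lemma val_one_plus: "0 < v z \<Longrightarrow> v (1 + z) = 0"
  using val_add[of 1 z] val_add[of "1 + z" "- z"]
  by (simp add: min_def split: if_splits)

lemma one_plus_nonzero: "0 < v z \<Longrightarrow> 1 + z \<noteq> 0"
  using val_one_plus by fastforce

lemma val_sign_mult [simp]: "v (of_int (sign p) * x) = v x"
  by (cases rule: sign_cases[of p]) auto

end

locale residue_field_character = discrete_valuation v for v :: "'a::field \<Rightarrow> ereal" +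
  fixes \<psi> :: "'a \<Rightarrow> complex" and S :: "'a set"
  assumes finite_S: "finite S" and S_integral: "\<And>s. s \<in> S \<Longrightarrow> 0 \<le> v s"
    and S_covers: "\<And>a. 0 \<le> v a \<Longrightarrow> \<exists>s\<in>S. 1 \<le> v (a - s)"
    and psi_add: "\<And>a b. \<psi> (a + b) = \<psi> a * \<psi> b"
    and psi_trivial: "\<And>a. 1 \<le> v a \<Longrightarrow> \<psi> a = 1"
    and psi_nontrivial: "\<exists>a. 0 \<le> v a \<and> \<psi> a \<noteq> 1"
begin

lemma psi_zero [simp]: "\<psi> 0 = 1"
  using psi_trivial[of 0] by simp

lemma psi_minus_mult: "\<psi> (- a) * \<psi> a = 1"
  using psi_add[of "- a" a] by simp

definition cong_P :: "'a \<Rightarrow> 'a \<Rightarrow> bool" where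
  "cong_P a b \<longleftrightarrow> 1 \<le> v (a - b)"

lemma cong_P_sym: "cong_P a b \<Longrightarrow> cong_P b a"
  unfolding cong_P_def by (metis minus_diff_eq val_minus)

lemma cong_P_trans: "cong_P a b \<Longrightarrow> cong_P b c \<Longrightarrow> cong_P a c"
  unfolding cong_P_def using val_add_ge[of 1 "a - b" "b - c"] by simp

text \<open>\<open>S\<close> may contain several representatives of a residue class; \<open>T\<close> keeps exactly one.\<close>

definition rep :: "'a \<Rightarrow> 'a" where
  "rep a = (SOME s. s \<in> S \<and> cong_P a s)"

definition T :: "'a set" where
  "T = rep ` S"

lemma rep: "0 \<le> v a \<Longrightarrow> rep a \<in> S \<and> cong_P a (rep a)"
  unfolding rep_def cong_P_def by (rule someI_ex) (use S_covers in blast)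

lemma rep_cong:
  assumes "cong_P a b" shows "rep a = rep b"
proof -
  have "(\<lambda>s. s \<in> S \<and> cong_P a s) = (\<lambda>s. s \<in> S \<and> cong_P b s)"
    using assms by (auto intro: cong_P_trans cong_P_sym)
  then show ?thesis unfolding rep_def by simp
qed

lemma finite_T: "finite T"
  unfolding T_def using finite_S by simp

lemma T_integral: "t \<in> T \<Longrightarrow> 0 \<le> v t"
  unfolding T_def using rep S_integral by auto

lemma rep_in_T: "0 \<le> v a \<Longrightarrow> rep a \<in> T"
  unfolding T_def using rep rep_cong by (metis image_eqI)

lemma rep_T: "t \<in> T \<Longrightarrow> rep t = t"
  unfolding T_def using rep S_integral rep_cong cong_P_sym by (metis imageE)

lemma T_cong_P_eq: "t1 \<in> T \<Longrightarrow> t2 \<in> T \<Longrightarrow> cong_P t1 t2 \<Longrightarrow> t1 = t2"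
  using rep_T rep_cong by metis

definition residue_char :: "('a \<Rightarrow> complex) \<Rightarrow> bool" where
  "residue_char h \<longleftrightarrow>
     (\<forall>a b. 0 \<le> v a \<longrightarrow> 0 \<le> v b \<longrightarrow> h (a + b) = h a * h b) \<and> (\<forall>a. 1 \<le> v a \<longrightarrow> h a = 1)"

lemma residue_char_rep:
  assumes h: "residue_char h" and a: "0 \<le> v a"
  shows "h (rep a) = h a"
proof -
  have r: "0 \<le> v (rep a)" and d: "1 \<le> v (a - rep a)"
    using rep[OF a] S_integral unfolding cong_P_def by auto
  have "0 \<le> v (a - rep a)" using d by (rule order_trans[rotated]) simp
  then have "h a = h (rep a) * h (a - rep a)"
    using h r unfolding residue_char_def by (metis add.commute diff_add_cancel)
  with h d show ?thesis unfolding residue_char_def by simp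
qed

text \<open>Translation by \<open>c\<close> permutes the residue classes, so a nontrivial character sums to zero.\<close>

lemma residue_char_sum_eq_0:
  assumes h: "residue_char h" and c: "0 \<le> v c" "h c \<noteq> 1"
  shows "(\<Sum>t\<in>T. h t) = 0"
proof -
  define \<tau> where "\<tau> t = rep (t + c)" for t
  have shift_integral: "0 \<le> v (t + c)" if "t \<in> T" for t
    using T_integral that c val_add_ge by blast
  have "inj_on \<tau> T"
  proof
    fix x y assume "x \<in> T" "y \<in> T" "\<tau> x = \<tau> y"
    then have "cong_P (x + c) (y + c)"
      unfolding \<tau>_def by (metis cong_P_sym cong_P_trans rep shift_integral)
    then have "cong_P x y" unfolding cong_P_def by simp
    with \<open>x \<in> T\<close> \<open>y \<in> T\<close> show "x = y" by (rule T_cong_P_eq)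
  qed
  moreover have "\<tau> ` T \<subseteq> T" using rep_in_T shift_integral unfolding \<tau>_def by auto
  ultimately have perm: "\<tau> ` T = T" using endo_inj_surj[OF finite_T] by blast
  have "(\<Sum>t\<in>T. h t) = (\<Sum>t\<in>T. h (\<tau> t))"
    using sum.reindex[OF \<open>inj_on \<tau> T\<close>, of h] perm by simp
  also have "\<dots> = (\<Sum>t\<in>T. h t * h c)"
  proof (rule sum.cong[OF refl])
    fix t assume "t \<in> T"
    then show "h (\<tau> t) = h t * h c"
      using h T_integral c shift_integral residue_char_rep unfolding \<tau>_def residue_char_def by metis
  qed
  also have "\<dots> = (\<Sum>t\<in>T. h t) * h c" by (simp add: sum_distrib_right)
  finally have "(\<Sum>t\<in>T. h t) * (1 - h c) = 0" by (simp add: algebra_simps)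
  with c show ?thesis by simp
qed

lemma residue_char_psi_mult: "0 \<le> v x \<Longrightarrow> residue_char (\<lambda>d. \<psi> (d * x))"
  unfolding residue_char_def
  using psi_add psi_trivial add_mono[of 1 _ 0 "v x"] by (auto simp: algebra_simps val_mult)

lemma residue_char_twist:
  assumes h: "residue_char h" and d: "0 \<le> v d"
  shows "residue_char (\<lambda>c. h c * \<psi> (- (d * c)))"
  using h psi_add[of "- (d * _)" "- (d * _)"] psi_trivial add_mono[OF d, of 1]
  unfolding residue_char_def by (auto simp: algebra_simps val_mult)

lemma psi_sum_eq_0:
  assumes x: "0 \<le> v x" "\<not> 1 \<le> v x"
  shows "(\<Sum>d\<in>T. \<psi> (d * x)) = 0"
proof -
  obtain a where a: "0 \<le> v a" "\<psi> a \<noteq> 1" using psi_nontrivial by blast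
  have vx: "v x = 0" using val_nonneg_less_one x by blast
  then have "x \<noteq> 0" by auto
  with vx a have "0 \<le> v (a / x)" "\<psi> (a / x * x) \<noteq> 1"
    by (simp_all add: divide_inverse val_mult val_inverse mult.assoc)
  then show ?thesis using residue_char_sum_eq_0[OF residue_char_psi_mult[OF x(1)]] by blast
qed

lemma residue_char_twist_sum_eq_0:
  assumes h: "residue_char h" and d: "0 \<le> v d" and c: "0 \<le> v c" "h c \<noteq> \<psi> (d * c)"
  shows "(\<Sum>t\<in>T. h t * \<psi> (- (d * t))) = 0"
proof -
  have "h c * \<psi> (- (d * c)) \<noteq> 1"
  proof
    assume "h c * \<psi> (- (d * c)) = 1"
    then have "h c * (\<psi> (- (d * c)) * \<psi> (d * c)) = \<psi> (d * c)" by (simp add: mult.assoc[symmetric])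
    with c show False by (simp add: psi_minus_mult)
  qed
  then show ?thesis using residue_char_sum_eq_0[OF residue_char_twist[OF h d] c(1)] by blast
qed

text \<open>Fourier inversion at a point of \<open>P\<close>: if \<open>h\<close> were orthogonal to every \<open>\<psi>(d \<cdot>)\<close>,
  then \<open>card T \<cdot> h(t\<^sub>0) = 0\<close>.\<close>

lemma residue_char_eq_psi:
  assumes h: "residue_char h"
  shows "\<exists>d. 0 \<le> v d \<and> (\<forall>a. 0 \<le> v a \<longrightarrow> h a = \<psi> (d * a))"
proof (rule ccontr)
  assume "\<not> ?thesis"
  then have orth: "(\<Sum>c\<in>T. h c * \<psi> (- (d * c))) = 0" if "d \<in> T" for d
    using residue_char_twist_sum_eq_0[OF h] T_integral[OF that] by blast
  define t0 where "t0 = rep 0"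
  have t0: "t0 \<in> T" "1 \<le> v t0"
    using rep_in_T[of 0] rep[of 0] unfolding t0_def cong_P_def by simp_all
  have "0 = (\<Sum>d\<in>T. \<psi> (d * t0) * (\<Sum>c\<in>T. h c * \<psi> (- (d * c))))"
    using orth by simp
  also have "\<dots> = (\<Sum>c\<in>T. h c * (\<Sum>d\<in>T. \<psi> (d * (t0 - c))))"
  proof -
    have eq: "\<psi> (d * t0) * (h c * \<psi> (- (d * c))) = h c * \<psi> (d * (t0 - c))" for d c
      using psi_add[of "d * t0" "- (d * c)"] by (simp add: right_diff_distrib)
    then have "(\<Sum>d\<in>T. \<psi> (d * t0) * (\<Sum>c\<in>T. h c * \<psi> (- (d * c))))
        = (\<Sum>d\<in>T. \<Sum>c\<in>T. h c * \<psi> (d * (t0 - c)))"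
      by (simp only: sum_distrib_left eq)
    also have "\<dots> = (\<Sum>c\<in>T. \<Sum>d\<in>T. h c * \<psi> (d * (t0 - c)))"
      by (rule sum.swap)
    finally show ?thesis by (simp add: sum_distrib_left)
  qed
  also have "\<dots> = (\<Sum>c\<in>T. if c = t0 then h t0 * of_nat (card T) else 0)"
  proof (rule sum.cong[OF refl])
    fix c assume c: "c \<in> T"
    have "c \<noteq> t0 \<Longrightarrow> \<not> 1 \<le> v (t0 - c)"
      using T_cong_P_eq[OF t0(1) c] unfolding cong_P_def by blast
    moreover have "0 \<le> v (t0 - c)" using T_integral c t0(1) val_diff_ge by blast
    ultimately show "h c * (\<Sum>d\<in>T. \<psi> (d * (t0 - c))) = (if c = t0 then h t0 * of_nat (card T) else 0)"
      using psi_sum_eq_0 by auto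
  qed
  also have "\<dots> = h t0 * of_nat (card T)" using t0 finite_T by simp
  finally have "h t0 * of_nat (card T) = 0" by simp
  moreover have "card T \<noteq> 0" using t0 finite_T by auto
  moreover have "h t0 = 1" using h t0 unfolding residue_char_def by blast
  ultimately show False by simp
qed

text \<open>Rescaling by an element of valuation \<open>j\<close> turns a character of \<open>P\<^sup>j/P\<^sup>j\<^sup>+\<^sup>1\<close> into a character of \<open>O/P\<close>.\<close>

lemma psi_extend_step:
  fixes f :: "'a \<Rightarrow> complex" and j :: int
  assumes j: "0 \<le> j"
    and add: "\<And>a b. ereal (of_int j) \<le> v a \<Longrightarrow> ereal (of_int j) \<le> v b \<Longrightarrow> f (a + b) = f a * f b"
    and prev: "\<And>a. ereal (of_int (j + 1)) \<le> v a \<Longrightarrow> f a = \<psi> (\<beta> * a)"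
  shows "\<exists>\<delta>. ereal (- of_int j) \<le> v \<delta> \<and> (\<forall>a. ereal (of_int j) \<le> v a \<longrightarrow> f a = \<psi> ((\<beta> + \<delta>) * a))"
proof -
  obtain \<pi> where "v \<pi> = ereal 1" using val_surj[of 1] by auto
  define p where "p = \<pi> ^ nat j"
  have vp: "v p = ereal (of_int j)" unfolding p_def using val_power[OF \<open>v \<pi> = ereal 1\<close>] j by simp
  then have "p \<noteq> 0" by auto
  have v_pb: "v (p * b) = ereal (of_int j) + v b" for b by (simp add: val_mult vp)
  define h where "h b = f (p * b) * \<psi> (- (\<beta> * (p * b)))" for b
  have "residue_char h"
    unfolding residue_char_def
  proof (intro conjI allI impI)
    fix a b assume "0 \<le> v a" "0 \<le> v b"
    then have "ereal (of_int j) \<le> v (p * a)" "ereal (of_int j) \<le> v (p * b)"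
      unfolding v_pb using add_left_mono[of 0 _ "ereal (of_int j)"] by auto
    then show "h (a + b) = h a * h b"
      unfolding h_def using add psi_add[of "- (\<beta> * (p * a))" "- (\<beta> * (p * b))"]
      by (simp add: algebra_simps)
  next
    fix a assume "1 \<le> v a"
    then have "ereal (of_int (j + 1)) \<le> v (p * a)"
      unfolding v_pb using add_left_mono[of 1 _ "ereal (of_int j)"] by (simp add: one_ereal_def)
    then show "h a = 1" unfolding h_def using prev psi_minus_mult by (simp add: mult.commute)
  qed
  then obtain d where d: "0 \<le> v d" and hd: "\<And>b. 0 \<le> v b \<Longrightarrow> h b = \<psi> (d * b)"
    using residue_char_eq_psi by blast
  have v_inv_p: "v (inverse p) = ereal (- of_int j)" using val_inverse[OF \<open>p \<noteq> 0\<close>] vp by simp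
  have "ereal (- of_int j) \<le> v (d / p)"
    using add_mono[OF d order_refl[of "ereal (- of_int j)"]] v_inv_p
    by (simp add: divide_inverse val_mult)
  moreover have "f a = \<psi> ((\<beta> + d / p) * a)" if a: "ereal (of_int j) \<le> v a" for a
  proof -
    have "v (a / p) = v a + ereal (- of_int j)" using v_inv_p by (simp add: divide_inverse val_mult)
    then have "0 \<le> v (a / p)" using ereal_le_add_shift[OF a val_not_minf, of 0] by (simp add: zero_ereal_def)
    moreover have "f a = h (a / p) * \<psi> (\<beta> * a)"
      unfolding h_def using \<open>p \<noteq> 0\<close> psi_minus_mult[of "\<beta> * a"] by (simp add: mult.assoc)
    ultimately have "f a = \<psi> (d * (a / p) + \<beta> * a)" using hd psi_add by simp
    also have "d * (a / p) + \<beta> * a = (\<beta> + d / p) * a" by (simp add: algebra_simps)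
    finally show ?thesis .
  qed
  ultimately show ?thesis by blast
qed

lemma char_of_ideal_quotient_eq_psi:
  fixes f :: "'a \<Rightarrow> complex" and m k :: int
  assumes m: "0 \<le> m" "m \<le> k"
    and add: "\<And>a b. ereal (of_int m) \<le> v a \<Longrightarrow> ereal (of_int m) \<le> v b \<Longrightarrow> f (a + b) = f a * f b"
    and triv: "\<And>a. ereal (of_int k) \<le> v a \<Longrightarrow> f a = 1"
  shows "\<exists>\<beta>. ereal (of_int (1 - k)) \<le> v \<beta> \<and> (\<forall>a. ereal (of_int m) \<le> v a \<longrightarrow> f a = \<psi> (\<beta> * a))"
proof -
  have "m \<le> j \<longrightarrow> (\<exists>\<beta>. ereal (of_int (1 - k)) \<le> v \<beta> \<and>
          (\<forall>a. ereal (of_int j) \<le> v a \<longrightarrow> f a = \<psi> (\<beta> * a)))" if "j \<le> k" for j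
    using that
  proof (induction j rule: int_le_induct)
    case base
    show ?case using triv by (intro impI exI[of _ 0]) simp
  next
    case (step i)
    show ?case
    proof
      assume "m \<le> i - 1"
      then obtain \<beta> where \<beta>: "ereal (of_int (1 - k)) \<le> v \<beta>"
        and prev: "\<And>a. ereal (of_int (i - 1 + 1)) \<le> v a \<Longrightarrow> f a = \<psi> (\<beta> * a)"
        using step.IH by auto
      have add': "f (a + b) = f a * f b"
        if "ereal (of_int (i - 1)) \<le> v a" "ereal (of_int (i - 1)) \<le> v b" for a b
        using that add order_trans[of "ereal (of_int m)" "ereal (of_int (i - 1))"] \<open>m \<le> i - 1\<close>
        by simp
      obtain \<delta> where \<delta>: "ereal (- of_int (i - 1)) \<le> v \<delta>"
        and f\<delta>: "\<forall>a. ereal (of_int (i - 1)) \<le> v a \<longrightarrow> f a = \<psi> ((\<beta> + \<delta>) * a)"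
        using psi_extend_step[of "i - 1" f \<beta>] \<open>m \<le> i - 1\<close> m(1) add' prev by auto
      have "ereal (of_int (1 - k)) \<le> v \<delta>"
        using \<delta> step.hyps by (simp add: order_trans[rotated])
      then have "ereal (of_int (1 - k)) \<le> v (\<beta> + \<delta>)" using \<beta> val_add_ge by blast
      with f\<delta> show "\<exists>\<beta>. ereal (of_int (1 - k)) \<le> v \<beta> \<and>
          (\<forall>a. ereal (of_int (i - 1)) \<le> v a \<longrightarrow> f a = \<psi> (\<beta> * a))" by blast
    qed
  qed
  with m show ?thesis by blast
qed

end

definition scaling_mat :: "'a::field \<Rightarrow> 'n \<Rightarrow> 'a^'n::finite^'n" where
  "scaling_mat a k = (\<chi> i j. if i = j then (if i = k then a else 1) else 0)"

definition transvection :: "'n::finite \<Rightarrow> 'n \<Rightarrow> 'a::field \<Rightarrow> 'a^'n^'n" where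
  "transvection m n c = (\<chi> i j. if i = m \<and> j = n then c else of_bool (i = j))"

definition swap_mat :: "'n::finite \<Rightarrow> 'n \<Rightarrow> 'a::field^'n^'n" where
  "swap_mat m n = (\<chi> i j. mat 1 $ i $ Transposition.transpose m n j)"

lemma scaling_mat_nth: "scaling_mat a k $ i $ j = (if i = j then (if i = k then a else 1) else 0)"
  unfolding scaling_mat_def by simp

lemma transvection_nth: "transvection m n c $ i $ j = (if i = m \<and> j = n then c else of_bool (i = j))"
  unfolding transvection_def by simp

lemma swap_mat_nth: "swap_mat m n $ i $ j = (if i = Transposition.transpose m n j then 1 else 0)"
  unfolding swap_mat_def mat_def by simp

lemma scaling_mat_mult_left_nth:
  "(scaling_mat a k ** B) $ i $ j = (if i = k then a else 1) * B $ i $ j"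
proof -
  have "(scaling_mat a k ** B) $ i $ j = (\<Sum>l\<in>UNIV. if l = i then (if i = k then a else 1) * B $ l $ j else 0)"
    unfolding scaling_mat_def matrix_matrix_mult_def vec_lambda_beta by (intro sum.cong) auto
  then show ?thesis by simp
qed

lemma scaling_mat_mult_right_nth:
  "(B ** scaling_mat a k) $ i $ j = B $ i $ j * (if j = k then a else 1)"
proof -
  have "(B ** scaling_mat a k) $ i $ j = (\<Sum>l\<in>UNIV. if l = j then B $ i $ l * (if j = k then a else 1) else 0)"
    unfolding scaling_mat_def matrix_matrix_mult_def vec_lambda_beta by (intro sum.cong) auto
  then show ?thesis by simp
qed

lemma transvection_mult_left_nth:
  assumes "m \<noteq> n"
  shows "(transvection m n c ** B) $ i $ j = B $ i $ j + (if i = m then c * B $ n $ j else 0)"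
proof -
  have "(transvection m n c ** B) $ i $ j
      = (\<Sum>l\<in>UNIV. (if l = i then B $ l $ j else 0) + (if l = n then (if i = m then c * B $ l $ j else 0) else 0))"
    unfolding transvection_def matrix_matrix_mult_def vec_lambda_beta by (rule sum.cong) (use assms in auto)
  then show ?thesis by (simp only: sum.distrib sum.delta finite UNIV_I if_True)
qed

lemma transvection_mult_right_nth:
  assumes "m \<noteq> n"
  shows "(B ** transvection m n c) $ i $ j = B $ i $ j + (if j = n then B $ i $ m * c else 0)"
proof -
  have "(B ** transvection m n c) $ i $ j
      = (\<Sum>l\<in>UNIV. (if l = j then B $ i $ l else 0) + (if l = m then (if j = n then B $ i $ l * c else 0) else 0))"
    unfolding transvection_def matrix_matrix_mult_def vec_lambda_beta by (rule sum.cong) (use assms in auto)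
  then show ?thesis by (simp only: sum.distrib sum.delta finite UNIV_I if_True)
qed

lemma swap_mat_mult_left_nth: "(swap_mat m n ** B) $ i $ j = B $ Transposition.transpose m n i $ j"
proof -
  have "(swap_mat m n ** B) $ i $ j = (\<Sum>l\<in>UNIV. if l = Transposition.transpose m n i then B $ l $ j else 0)"
    unfolding swap_mat_def matrix_matrix_mult_def mat_def vec_lambda_beta
    by (intro sum.cong) (auto simp: transpose_eq_iff)
  then show ?thesis by simp
qed

lemma swap_mat_mult_right_nth: "(B ** swap_mat m n) $ i $ j = B $ i $ Transposition.transpose m n j"
proof -
  have "(B ** swap_mat m n) $ i $ j = (\<Sum>l\<in>UNIV. if l = Transposition.transpose m n j then B $ i $ l else 0)"
    unfolding swap_mat_def matrix_matrix_mult_def mat_def vec_lambda_beta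
    by (intro sum.cong) (auto simp: transpose_eq_iff)
  then show ?thesis by simp
qed

lemma scaling_mat_mult: "scaling_mat a k ** scaling_mat b k = scaling_mat (a * b) k"
  by (simp add: vec_eq_iff scaling_mat_mult_left_nth scaling_mat_nth)

lemma scaling_mat_one [simp]: "scaling_mat 1 k = mat 1"
  by (simp add: vec_eq_iff scaling_mat_nth mat_def)

lemma transvection_mult:
  assumes "m \<noteq> n" shows "transvection m n a ** transvection m n b = transvection m n (a + b)"
  using assms by (auto simp: vec_eq_iff transvection_mult_left_nth[OF assms] transvection_nth)

lemma transvection_zero [simp]: "m \<noteq> n \<Longrightarrow> transvection m n 0 = mat 1"
  by (auto simp: vec_eq_iff transvection_nth mat_def)

lemma swap_mat_mult_self: "swap_mat m n ** swap_mat m n = mat 1"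
  by (auto simp: vec_eq_iff swap_mat_mult_left_nth swap_mat_nth mat_def transpose_eq_iff)

lemma swap_mat_conj_scaling_mat: "swap_mat m n ** scaling_mat a m ** swap_mat m n = scaling_mat a n"
  by (auto simp: vec_eq_iff swap_mat_mult_left_nth swap_mat_mult_right_nth scaling_mat_mult_left_nth
      scaling_mat_mult_right_nth swap_mat_nth scaling_mat_nth transpose_eq_iff)

lemma scaling_mat_conj_transvection:
  assumes "m \<noteq> n" "d \<noteq> 0"
  shows "scaling_mat d m ** transvection m n c ** scaling_mat (inverse d) m = transvection m n (d * c)"
  using assms
  by (auto simp: vec_eq_iff scaling_mat_mult_left_nth scaling_mat_mult_right_nth
      transvection_mult_left_nth[OF assms(1)] transvection_mult_right_nth[OF assms(1)]
      scaling_mat_nth transvection_nth)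

lemma invertible_scaling_mat: "a \<noteq> 0 \<Longrightarrow> invertible (scaling_mat a k)"
  unfolding invertible_def
  by (rule exI[of _ "scaling_mat (inverse a) k"]) (simp add: scaling_mat_mult mult.commute)

lemma invertible_transvection: "m \<noteq> n \<Longrightarrow> invertible (transvection m n c)"
  unfolding invertible_def by (rule exI[of _ "transvection m n (- c)"]) (simp add: transvection_mult)

lemma det_scaling_mat [simp]: "det (scaling_mat a k) = a"
proof -
  have "det (scaling_mat a k) = (\<Prod>i\<in>UNIV. scaling_mat a k $ i $ i)"
    by (rule det_diagonal) (simp add: scaling_mat_nth)
  then show ?thesis by (simp add: scaling_mat_nth prod.delta)
qed

lemma det_transvection:
  assumes "m \<noteq> n" shows "det (transvection m n c) = 1"
proof -
  have "transvection m n c = (\<chi> k. if k = m then row m (mat 1) + c *s row n (mat 1) else row k (mat 1))"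
    using assms by (auto simp: vec_eq_iff transvection_nth row_def mat_def)
  then show ?thesis using det_row_operation[OF assms, of "mat 1" c] by simp
qed

lemma invertible_pivot:
  fixes A :: "'a::field^'n::finite^'n"
  assumes A: "invertible A" and k: "k \<in> K"
    and offdiag: "\<And>i j. j \<notin> K \<Longrightarrow> i \<noteq> j \<Longrightarrow> A $ i $ j = 0"
  shows "\<exists>p\<in>K. A $ p $ k \<noteq> 0"
proof (rule ccontr)
  assume "\<not> ?thesis"
  then have col_k: "A $ p $ k = 0" if "p \<in> K" for p using that by blast
  obtain B where B: "B ** A = mat 1" using A unfolding invertible_def by blast
  have BA: "(B ** A) $ i $ j = B $ i $ j * A $ j $ j" if "j \<notin> K" for i j
  proof -
    have "(B ** A) $ i $ j = (\<Sum>l\<in>UNIV. if l = j then B $ i $ l * A $ l $ j else 0)"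
      unfolding matrix_matrix_mult_def vec_lambda_beta by (rule sum.cong) (use offdiag that in auto)
    then show ?thesis by simp
  qed
  have "B $ k $ j = 0" if "j \<notin> K" for j
  proof -
    have "B $ j $ j * A $ j $ j = 1" using BA[OF that, of j] B by (simp add: mat_def)
    moreover have "k \<noteq> j" using k that by blast
    then have "B $ k $ j * A $ j $ j = 0" using BA[OF that, of k] B by (simp add: mat_def)
    ultimately show ?thesis by auto
  qed
  then have "(B ** A) $ k $ k = 0"
    unfolding matrix_matrix_mult_def vec_lambda_beta by (intro sum.neutral) (metis col_k mult_zero_left mult_zero_right)
  with B show False by (simp add: mat_def)
qed

text \<open>Gaussian elimination by row operations \<open>row\<^sub>i += c \<cdot> row\<^sub>j\<close>. The columns outside \<open>K\<close> are already
  diagonal; adding multiples of a row with index in \<open>insert k K\<close> keeps them so while column \<open>k\<close> is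
  cleared.\<close>

context
  fixes P :: "'a::field^'n::finite^'n \<Rightarrow> bool" and K :: "'n set"
  assumes cancel: "\<And>m n c B. m \<noteq> n \<Longrightarrow> P (transvection m n c ** B) \<Longrightarrow> P B"
    and cleared: "\<And>A. invertible A \<Longrightarrow> (\<And>i j. j \<notin> K \<Longrightarrow> i \<noteq> j \<Longrightarrow> A $ i $ j = 0) \<Longrightarrow> P A"
begin

lemma transvection_clear_below_pivot:
  assumes "invertible A" "\<And>i j. j \<notin> insert k K \<Longrightarrow> i \<noteq> j \<Longrightarrow> A $ i $ j = 0" "A $ k $ k \<noteq> 0"
    and "\<And>i. i \<notin> L \<Longrightarrow> i \<noteq> k \<Longrightarrow> A $ i $ k = 0"
  shows "P A"
  using finite[of L] assms
proof (induction L arbitrary: A rule: finite_induct)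
  case empty
  then show ?case using cleared by (metis empty_iff insertE)
next
  case (insert l L)
  show ?case
  proof (cases "l = k")
    case True
    with insert show ?thesis by (metis insertE)
  next
    case False
    define A' where "A' = transvection l k (- (A $ l $ k / A $ k $ k)) ** A"
    have "P A'"
    proof (rule insert.IH)
      show "invertible A'"
        unfolding A'_def by (intro invertible_mult invertible_transvection False insert.prems)
      show "A' $ i $ j = 0" if "j \<notin> insert k K" "i \<noteq> j" for i j
        using that insert.prems(2) False unfolding A'_def transvection_mult_left_nth[OF False] by auto
      show "A' $ k $ k \<noteq> 0"
        using insert.prems(3) False unfolding A'_def transvection_mult_left_nth[OF False] by simp
      show "A' $ i $ k = 0" if "i \<notin> L" "i \<noteq> k" for i
        using that insert.prems(3,4) unfolding A'_def transvection_mult_left_nth[OF False] by auto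
    qed
    then show ?thesis using cancel False unfolding A'_def by blast
  qed
qed

lemma transvection_clear_column:
  assumes A: "invertible A" "\<And>i j. j \<notin> insert k K \<Longrightarrow> i \<noteq> j \<Longrightarrow> A $ i $ j = 0"
  shows "P A"
proof (cases "A $ k $ k = 0")
  case False
  then show ?thesis using transvection_clear_below_pivot[OF A, where L = UNIV] by blast
next
  case True
  then obtain p where p: "p \<in> insert k K" "A $ p $ k \<noteq> 0" "k \<noteq> p"
    using invertible_pivot[OF A(1) insertI1 A(2)] by metis
  define A' where "A' = transvection k p 1 ** A"
  have "P A'"
  proof (rule transvection_clear_below_pivot[where k = k and L = UNIV])
    show "invertible A'" unfolding A'_def by (intro invertible_mult invertible_transvection p A)
    show "A' $ i $ j = 0" if "j \<notin> insert k K" "i \<noteq> j" for i j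
      using that A(2)[of j i] A(2)[of j p] p unfolding A'_def transvection_mult_left_nth[OF p(3)] by auto
    show "A' $ k $ k \<noteq> 0" using True p unfolding A'_def transvection_mult_left_nth[OF p(3)] by simp
  qed simp
  then show ?thesis using cancel p(3) unfolding A'_def by blast
qed

end

lemma invertible_transvection_induct:
  fixes P :: "'a::field^'n::finite^'n \<Rightarrow> bool"
  assumes "invertible A"
    and diagonal: "\<And>D. invertible D \<Longrightarrow> (\<And>i j. i \<noteq> j \<Longrightarrow> D $ i $ j = 0) \<Longrightarrow> P D"
    and transvection: "\<And>m n c B. m \<noteq> n \<Longrightarrow> P B \<Longrightarrow> P (transvection m n c ** B)"
  shows "P A"
proof -
  have cancel: "P B" if "m \<noteq> n" "P (transvection m n c ** B)" for m n c B
    using transvection[OF that, of "- c"] by (simp add: matrix_mul_assoc transvection_mult that(1))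
  have "P A" if "invertible A" "\<And>i j. j \<notin> K \<Longrightarrow> i \<noteq> j \<Longrightarrow> A $ i $ j = 0" for A and K :: "'n set"
    using finite[of K] that
  proof (induction K arbitrary: A rule: finite_induct)
    case empty
    then show ?case using diagonal by blast
  next
    case (insert k K)
    show ?case
    proof (rule transvection_clear_column[where K = K and k = k])
      show "P B" if "m \<noteq> n" "P (transvection m n c ** B)" for m n c B
        using that by (rule cancel)
      show "P B" if "invertible B" "\<And>i j. j \<notin> K \<Longrightarrow> i \<noteq> j \<Longrightarrow> B $ i $ j = 0" for B
        using that by (rule insert.IH)
    qed (use insert.prems in auto)
  qed
  with assms(1) show ?thesis by blast
qed

locale gl_character =
  fixes \<phi> :: "'a::field^'n::finite^'n \<Rightarrow> complex"
  assumes mult: "\<And>g h. invertible g \<Longrightarrow> invertible h \<Longrightarrow> \<phi> (g ** h) = \<phi> g * \<phi> h"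
    and nonzero: "\<And>g. invertible g \<Longrightarrow> \<phi> g \<noteq> 0"
begin

lemma phi_one [simp]: "\<phi> (mat 1) = 1"
proof -
  have "invertible (mat 1 :: 'a^'n^'n)" unfolding invertible_def by auto
  then show ?thesis using mult[of "mat 1" "mat 1"] nonzero[of "mat 1"] by simp
qed

lemma phi_conj:
  assumes g: "g ** g' = mat 1" and h: "invertible h"
  shows "\<phi> (g ** h ** g') = \<phi> h"
proof -
  have "g' ** g = mat 1" using g matrix_left_right_inverse by blast
  then have inv: "invertible g" "invertible g'" using g unfolding invertible_def by blast+
  then have "\<phi> (g ** h ** g') = \<phi> h * (\<phi> g * \<phi> g')"
    using mult[OF invertible_mult[OF inv(1) h] inv(2)] mult[OF inv(1) h] by (simp add: mult_ac)
  also have "\<phi> g * \<phi> g' = 1" using mult[OF inv] g by simp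
  finally show ?thesis by simp
qed

lemma phi_scaling_mat_mult:
  "a \<noteq> 0 \<Longrightarrow> b \<noteq> 0 \<Longrightarrow> \<phi> (scaling_mat (a * b) k) = \<phi> (scaling_mat a k) * \<phi> (scaling_mat b k)"
  using mult[OF invertible_scaling_mat invertible_scaling_mat, of a b k k] by (simp add: scaling_mat_mult)

lemma phi_scaling_mat_index: "a \<noteq> 0 \<Longrightarrow> \<phi> (scaling_mat a m) = \<phi> (scaling_mat a n)"
  using phi_conj[OF swap_mat_mult_self invertible_scaling_mat] swap_mat_conj_scaling_mat by metis

text \<open>Conjugating by \<open>diag(2, 1, \<dots>)\<close> doubles a transvection, so \<open>\<phi>(e) = \<phi>(e)\<^sup>2\<close>; this is where odd
  residual characteristic enters.\<close>

lemma phi_transvection: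
  assumes two: "(2::'a) \<noteq> 0" and mn: "m \<noteq> n"
  shows "\<phi> (transvection m n c) = 1"
proof -
  let ?e = "transvection m n c"
  have e: "invertible ?e" by (rule invertible_transvection[OF mn])
  have "\<phi> ?e * \<phi> ?e = \<phi> (transvection m n (2 * c))"
    using mult[OF e e] by (simp only: transvection_mult[OF mn] mult_2)
  also have "\<dots> = \<phi> (scaling_mat 2 m ** ?e ** scaling_mat (inverse 2) m)"
    by (simp only: scaling_mat_conj_transvection[OF mn two])
  also have "\<dots> = \<phi> ?e"
    using two by (intro phi_conj e) (simp add: scaling_mat_mult)
  finally have "\<phi> ?e * (\<phi> ?e - 1) = 0" by (simp add: algebra_simps)
  with nonzero[OF e] show ?thesis by simp
qed

lemma phi_diagonal:
  assumes diag: "\<And>i j. i \<noteq> j \<Longrightarrow> D $ i $ j = 0" and D: "invertible D"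
  shows "\<phi> D = \<phi> (scaling_mat (det D) k)"
proof -
  have "\<phi> D = \<phi> (scaling_mat (det D) k)"
    if "\<And>i j. i \<noteq> j \<Longrightarrow> D $ i $ j = 0" "\<And>i. i \<notin> K \<Longrightarrow> D $ i $ i = 1" "invertible D"
    for D and K :: "'n set"
    using finite[of K] that
  proof (induction K arbitrary: D rule: finite_induct)
    case empty
    then have "D = mat 1" by (auto simp: vec_eq_iff mat_def)
    then show ?case by simp
  next
    case (insert l K)
    define a where "a = D $ l $ l"
    define D' where "D' = (\<chi> i j. if i = l \<and> j = l then 1 else D $ i $ j)"
    have D_eq: "D = D' ** scaling_mat a l"
      unfolding a_def D'_def using insert.prems(1) by (auto simp: vec_eq_iff scaling_mat_mult_right_nth)
    then have det_D: "det D = det D' * a" by (simp add: det_mul)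
    with insert.prems(3) have "det D' \<noteq> 0" "a \<noteq> 0" by (auto simp: invertible_det_nz)
    then have D': "invertible D'" by (simp add: invertible_det_nz)
    have "\<phi> D = \<phi> D' * \<phi> (scaling_mat a l)"
      using D_eq mult[OF D' invertible_scaling_mat[OF \<open>a \<noteq> 0\<close>]] by simp
    also have "\<phi> D' = \<phi> (scaling_mat (det D') k)"
    proof (rule insert.IH[OF _ _ D'])
      show "D' $ i $ j = 0" if "i \<noteq> j" for i j using insert.prems(1) that unfolding D'_def by auto
      show "D' $ i $ i = 1" if "i \<notin> K" for i using insert.prems(2)[of i] that unfolding D'_def by simp
    qed
    also have "\<phi> (scaling_mat a l) = \<phi> (scaling_mat a k)"
      using phi_scaling_mat_index[OF \<open>a \<noteq> 0\<close>] .
    finally show ?case using phi_scaling_mat_mult \<open>det D' \<noteq> 0\<close> \<open>a \<noteq> 0\<close> det_D by simp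
  qed
  from this[of D UNIV] assms show ?thesis by blast
qed

theorem phi_eq_phi_det:
  assumes two: "(2::'a) \<noteq> 0" and A: "invertible A"
  shows "\<phi> A = \<phi> (scaling_mat (det A) k)"
proof -
  have "invertible A \<longrightarrow> \<phi> A = \<phi> (scaling_mat (det A) k)"
  proof (rule invertible_transvection_induct[OF A])
    fix m n :: 'n and c :: 'a and B :: "'a^'n^'n"
    assume mn: "m \<noteq> n" and IH: "invertible B \<longrightarrow> \<phi> B = \<phi> (scaling_mat (det B) k)"
    show "invertible (transvection m n c ** B) \<longrightarrow>
        \<phi> (transvection m n c ** B) = \<phi> (scaling_mat (det (transvection m n c ** B)) k)"
    proof
      assume "invertible (transvection m n c ** B)"
      then have "invertible B" by (simp add: invertible_det_nz det_mul det_transvection[OF mn])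
      then show "\<phi> (transvection m n c ** B) = \<phi> (scaling_mat (det (transvection m n c ** B)) k)"
        using IH mult[OF invertible_transvection[OF mn]] phi_transvection[OF two mn]
        by (simp add: det_mul det_transvection[OF mn])
    qed
  qed (use phi_diagonal in blast)
  with A show ?thesis by blast
qed

end

lemma matrix_add_rdistrib: "((A::'a::semiring_1^'n::finite^'n) + B) ** C = A ** C + B ** C"
  by (simp add: matrix_matrix_mult_def vec_eq_iff sum.distrib distrib_right)

lemma matrix_vector_mult_axis_nth: "((A::'a::semiring_1^'n::finite^'n) *v axis j 1) $ i = A $ i $ j"
proof -
  have "(A *v axis j 1) $ i = (\<Sum>k\<in>UNIV. if k = j then A $ i $ k else 0)"
    unfolding matrix_vector_mult_def axis_def vec_lambda_beta by (intro sum.cong) auto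
  then show ?thesis by simp
qed

context discrete_valuation
begin

lemma building_splitting:
  assumes "\<alpha> \<in> building v"
  obtains g g' :: "'a^'n::finite^'n" and s :: "'n \<Rightarrow> real"
  where "g ** g' = mat 1" "g' ** g = mat 1" "\<And>c. \<alpha> (g *v c) = (MIN i. v (c $ i) + ereal (s i))"
proof -
  obtain g :: "'a^'n^'n" and s where g: "invertible g" "\<And>c. \<alpha> (g *v c) = (MIN i. v (c $ i) + ereal (s i))"
    using assms unfolding building_def by blast
  moreover obtain g' where "g ** g' = mat 1" "g' ** g = mat 1" using g(1) unfolding invertible_def by blast
  ultimately show ?thesis using that by blast
qed

lemma lie_filt_conj_nth:
  fixes \<alpha> :: "'a^'n::finite \<Rightarrow> ereal" and g g' Y :: "'a^'n^'n"
  assumes gg: "g ** g' = mat 1" and split: "\<And>c. \<alpha> (g *v c) = (MIN i. v (c $ i) + ereal (s i))"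
    and Y: "Y \<in> lie_filt \<alpha> t"
  shows "ereal (t + s j - s i) \<le> v ((g' ** Y ** g) $ i $ j)"
proof -
  define e where "e = (axis j 1 :: 'a^'n)"
  have "(MIN i. v (e $ i) + ereal (s i)) = ereal (s j)"
    by (rule Min_eqI) (auto simp: e_def axis_def)
  then have \<alpha>e: "\<alpha> (g *v e) = ereal (s j)" using split by simp
  have "g ** (g' ** Y ** g) = ((g ** g') ** Y) ** g" by (simp only: matrix_mul_assoc)
  then have "g ** (g' ** Y ** g) = Y ** g" by (simp only: gg matrix_mul_lid)
  then have "Y *v (g *v e) = g *v ((g' ** Y ** g) *v e)" by (metis matrix_vector_mul_assoc)
  moreover have "\<alpha> (g *v e) + ereal t \<le> \<alpha> (Y *v (g *v e))" using Y unfolding lie_filt_def by blast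
  ultimately have "ereal (s j) + ereal t \<le> (MIN i. v (((g' ** Y ** g) *v e) $ i) + ereal (s i))"
    using \<alpha>e split by simp
  then have "\<forall>i. ereal (s j) + ereal t \<le> v (((g' ** Y ** g) *v e) $ i) + ereal (s i)"
    by (simp add: Min_ge_iff)
  then have "ereal (s j + t) \<le> v ((g' ** Y ** g) $ i $ j) + ereal (s i)"
    by (simp add: e_def matrix_vector_mult_axis_nth)
  then show ?thesis using ereal_le_minus_shift val_not_minf by (simp add: algebra_simps)
qed

lemma val_prod_one_plus_minus_sum:
  assumes "finite I" "0 \<le> t" "\<And>i. i \<in> I \<Longrightarrow> ereal t \<le> v (y i)"
  shows "ereal (2 * t) \<le> v ((\<Prod>i\<in>I. 1 + y i) - 1 - (\<Sum>i\<in>I. y i))"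
  using assms(1,3)
proof (induction I rule: finite_induct)
  case (insert a I)
  define E where "E = (\<Prod>i\<in>I. 1 + y i) - 1 - (\<Sum>i\<in>I. y i)"
  have eq: "(\<Prod>i\<in>insert a I. 1 + y i) - 1 - (\<Sum>i\<in>insert a I. y i) = E + y a * (\<Sum>i\<in>I. y i) + y a * E"
    using insert(1,2) unfolding E_def by (simp add: algebra_simps)
  have E: "ereal (2 * t) \<le> v E" unfolding E_def using insert by blast
  have ya: "ereal t \<le> v (y a)" and sum: "ereal t \<le> v (\<Sum>i\<in>I. y i)"
    using insert val_sum_ge by blast+
  have tt: "ereal t + ereal t = ereal (2 * t)" by simp
  have "ereal (2 * t) \<le> v (y a * (\<Sum>i\<in>I. y i))"
    using add_mono[OF ya sum] unfolding tt val_mult .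
  moreover have "ereal (2 * t) \<le> ereal t + ereal (2 * t)" using assms(2) by simp
  then have "ereal (2 * t) \<le> v (y a * E)"
    using add_mono[OF ya E] unfolding val_mult by (rule order_trans)
  ultimately show ?case unfolding eq using E by (intro val_add_ge)
qed simp

text \<open>A non-identity permutation moves at least two indices, each contributing \<open>t\<close>; the shifts
  \<open>s\<^sub>p\<^sub>(\<^sub>i\<^sub>) - s\<^sub>i\<close> cancel along the permutation.\<close>

lemma val_permutation_term_ge:
  fixes Y :: "'a^'n::finite^'n"
  assumes t: "0 \<le> t" and Y: "\<And>i j. ereal (t + s j - s i) \<le> v (Y $ i $ j)"
    and p: "p permutes UNIV" "p \<noteq> id"
  shows "ereal (2 * t) \<le> v (\<Prod>i\<in>UNIV. (mat 1 + Y) $ i $ p i)"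
proof -
  define c where "c i = (if p i = i then 0 else t + s (p i) - s i)" for i
  have "ereal (c i) \<le> v ((mat 1 + Y) $ i $ p i)" for i
  proof (cases "p i = i")
    case True
    have "0 \<le> v (Y $ i $ i)" using Y[where i = i and j = i] t by (simp add: order_trans[rotated])
    then show ?thesis using True unfolding c_def by (simp add: val_add_ge zero_ereal_def mat_def)
  qed (use Y[where i = i and j = "p i"] in \<open>simp add: c_def mat_def\<close>)
  then have vp: "ereal (sum c UNIV) \<le> v (\<Prod>i\<in>UNIV. (mat 1 + Y) $ i $ p i)" by (intro val_prod_ge) auto
  have "c i = (if p i = i then 0 else t) + (s (p i) - s i)" for i unfolding c_def by simp
  then have "sum c UNIV = (\<Sum>i\<in>UNIV. if p i = i then 0 else t) + ((\<Sum>i\<in>UNIV. s (p i)) - sum s UNIV)"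
    by (simp add: sum.distrib sum_subtractf)
  also have "(\<Sum>i\<in>UNIV. s (p i)) = sum s UNIV"
    using sum.permute[OF p(1), of s] by (simp add: comp_def)
  finally have sc: "sum c UNIV = (\<Sum>i\<in>UNIV. if p i = i then 0 else t)" by simp
  obtain a where a: "p a \<noteq> a" using p(2) by (metis id_apply ext)
  then have "p (p a) \<noteq> p a" using permutes_inj[OF p(1)] by (metis injD)
  with a have "2 * t = (\<Sum>i\<in>{a, p a}. if p i = i then 0 else t)" by simp
  also have "\<dots> \<le> (\<Sum>i\<in>UNIV. if p i = i then 0 else t)" by (rule sum_mono2) (use t in auto)
  finally show ?thesis using sc vp by (auto elim: order_trans[rotated])
qed

lemma val_det_one_plus_minus_trace:
  fixes Y :: "'a^'n::finite^'n"
  assumes t: "0 \<le> t" and Y: "\<And>i j. ereal (t + s j - s i) \<le> v (Y $ i $ j)"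
  shows "ereal (2 * t) \<le> v (det (mat 1 + Y) - 1 - trace Y)"
proof -
  define PS where "PS = {p. p permutes (UNIV::'n set)}"
  have PS: "finite PS" "id \<in> PS" unfolding PS_def by (simp_all add: finite_permutations)
  define f where "f p = of_int (sign p) * (\<Prod>i\<in>UNIV. (mat 1 + Y) $ i $ p i)" for p
  have "det (mat 1 + Y) = sum f PS" unfolding det_def f_def PS_def by simp
  also have "\<dots> = f id + sum f (PS - {id})" using sum.remove[OF PS] .
  finally have "det (mat 1 + Y) = f id + sum f (PS - {id})" .
  moreover have "f id = (\<Prod>i\<in>UNIV. 1 + Y $ i $ i)" unfolding f_def by (simp add: mat_def)
  ultimately have eq: "det (mat 1 + Y) - 1 - trace Y
      = ((\<Prod>i\<in>UNIV. 1 + Y $ i $ i) - 1 - (\<Sum>i\<in>UNIV. Y $ i $ i)) + sum f (PS - {id})"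
    unfolding trace_def by (simp add: algebra_simps)
  have "ereal (2 * t) \<le> v (f p)" if "p \<in> PS - {id}" for p
    using val_permutation_term_ge[OF t Y, of p] that unfolding f_def PS_def by simp
  then have "ereal (2 * t) \<le> v (sum f (PS - {id}))" using PS by (intro val_sum_ge) auto
  moreover have "ereal (2 * t) \<le> v ((\<Prod>i\<in>UNIV. 1 + Y $ i $ i) - 1 - (\<Sum>i\<in>UNIV. Y $ i $ i))"
    using Y[of i i for i] t by (intro val_prod_one_plus_minus_sum) simp_all
  ultimately show ?thesis unfolding eq by (intro val_add_ge)
qed

lemma lie_filt_trace_det:
  fixes \<alpha> :: "'a^'n::finite \<Rightarrow> ereal"
  assumes "\<alpha> \<in> building v" and Y: "Y \<in> lie_filt \<alpha> t" and t: "0 \<le> t"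
  shows "ereal t \<le> v (trace Y)" and "ereal (2 * t) \<le> v (det (mat 1 + Y) - 1 - trace Y)"
proof -
  obtain g g' :: "'a^'n^'n" and s where gg: "g ** g' = mat 1" "g' ** g = mat 1"
    and split: "\<And>c. \<alpha> (g *v c) = (MIN i. v (c $ i) + ereal (s i))"
    using building_splitting[OF assms(1)] by blast
  define Y' where "Y' = g' ** Y ** g"
  have Y': "ereal (t + s j - s i) \<le> v (Y' $ i $ j)" for i j
    unfolding Y'_def by (rule lie_filt_conj_nth[OF gg(1) split Y])
  have "trace Y' = trace (g ** (g' ** Y))" unfolding Y'_def by (rule trace_mul_sym)
  then have trace: "trace Y' = trace Y" by (simp add: matrix_mul_assoc gg(1))
  have "det g' * det g = 1" using gg(2) det_mul[of g' g] by simp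
  have Y1: "mat 1 + Y' = g' ** (mat 1 + Y) ** g"
    unfolding Y'_def by (simp only: matrix_add_ldistrib matrix_add_rdistrib matrix_mul_rid gg(2))
  have "det (mat 1 + Y') = det g' * det (mat 1 + Y) * det g" by (simp only: Y1 det_mul)
  also have "\<dots> = (det g' * det g) * det (mat 1 + Y)" by (simp add: mult_ac)
  finally have det: "det (mat 1 + Y') = det (mat 1 + Y)" using \<open>det g' * det g = 1\<close> by simp
  have "ereal t \<le> v (trace Y')"
    unfolding trace_def using Y'[of i i for i] by (intro val_sum_ge) simp_all
  then show "ereal t \<le> v (trace Y)" by (simp only: trace)
  show "ereal (2 * t) \<le> v (det (mat 1 + Y) - 1 - trace Y)"
    using val_det_one_plus_minus_trace[OF t Y'] unfolding det trace .
qed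

lemma lie_filt_realizes_det:
  fixes \<alpha> :: "'a^'n::finite \<Rightarrow> ereal"
  assumes "\<alpha> \<in> building v" and u: "ereal t \<le> v u"
  shows "\<exists>Z\<in>lie_filt \<alpha> t. det (mat 1 + Z) = 1 + u"
proof -
  obtain g g' :: "'a^'n^'n" and s where gg: "g ** g' = mat 1" "g' ** g = mat 1"
    and split: "\<And>c. \<alpha> (g *v c) = (MIN i. v (c $ i) + ereal (s i))"
    using building_splitting[OF assms(1)] by blast
  obtain k :: 'n where True by simp
  define N :: "'a^'n^'n" where "N = (\<chi> i j. if i = j \<and> i = k then u else 0)"
  define Z where "Z = g ** N ** g'"
  have N: "(N *v c) $ i = (if i = k then u * c $ i else 0)" for c i
  proof -
    have "(N *v c) $ i = (\<Sum>l\<in>UNIV. if l = i then (if i = k then u * c $ l else 0) else 0)"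
      unfolding N_def matrix_vector_mult_def vec_lambda_beta by (intro sum.cong) auto
    then show ?thesis by simp
  qed
  have N1: "mat 1 + N = scaling_mat (1 + u) k" by (simp add: vec_eq_iff N_def mat_def scaling_mat_nth)
  have Z1: "mat 1 + Z = g ** (mat 1 + N) ** g'"
    unfolding Z_def by (simp only: matrix_add_ldistrib matrix_add_rdistrib matrix_mul_rid gg(1))
  have "det g * det g' = 1" using gg(1) det_mul[of g g'] by simp
  have "det (mat 1 + Z) = det g * det (scaling_mat (1 + u) k) * det g'" by (simp only: Z1 N1 det_mul)
  also have "\<dots> = (det g * det g') * (1 + u)" by (simp add: mult_ac)
  finally have "det (mat 1 + Z) = 1 + u" using \<open>det g * det g' = 1\<close> by simp
  moreover have "Z \<in> lie_filt \<alpha> t"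
    unfolding lie_filt_def
  proof (intro CollectI allI)
    fix w :: "'a^'n"
    define c where "c = g' *v w"
    have w: "w = g *v c" unfolding c_def by (simp add: matrix_vector_mul_assoc gg(1))
    have Zw: "Z *v w = g *v (N *v c)" unfolding Z_def c_def by (simp only: matrix_vector_mul_assoc matrix_mul_assoc)
    have "(MIN i. v (c $ i) + ereal (s i)) + ereal t \<le> v ((N *v c) $ i) + ereal (s i)" for i
    proof (cases "i = k")
      case True
      have "(MIN i. v (c $ i) + ereal (s i)) + ereal t \<le> (v (c $ i) + ereal (s i)) + v u"
        using u by (intro add_mono Min_le) auto
      then show ?thesis using True unfolding N by (simp add: val_mult ac_simps)
    qed (simp add: N)
    moreover have "\<alpha> w = (MIN i. v (c $ i) + ereal (s i))" using split w by simp
    moreover have "\<alpha> (Z *v w) = (MIN i. v ((N *v c) $ i) + ereal (s i))" using split Zw by simp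
    ultimately show "\<alpha> w + ereal t \<le> \<alpha> (Z *v w)" by (simp add: Min_ge_iff)
  qed
  ultimately show ?thesis by blast
qed

lemma trace_functional_in_dual_filt:
  assumes "\<alpha> \<in> building v" "0 \<le> r" and \<beta>: "ereal (of_int (- \<lfloor>r\<rfloor>)) \<le> v \<beta>"
  shows "(\<lambda>X. \<beta> * trace X) \<in> dual_filt v \<alpha> (- r)"
  unfolding dual_filt_def
proof (intro CollectI ballI)
  fix Y assume "Y \<in> lie_filt_plus \<alpha> (- (- r))"
  then obtain t where t: "r < t" "Y \<in> lie_filt \<alpha> t" unfolding lie_filt_plus_def by auto
  with \<open>0 \<le> r\<close> have "0 \<le> t" by simp
  have "ereal r < ereal t" using t(1) by simp
  also have "\<dots> \<le> v (trace Y)" by (rule lie_filt_trace_det(1)[OF assms(1) t(2) \<open>0 \<le> t\<close>])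
  finally have "ereal r < v (trace Y)" .
  then have "ereal (of_int (\<lfloor>r\<rfloor> + 1)) \<le> v (trace Y)" by (rule val_gt_imp_ge_floor_plus_one)
  with \<beta> have "ereal (of_int (- \<lfloor>r\<rfloor>)) + ereal (of_int (\<lfloor>r\<rfloor> + 1)) \<le> v (\<beta> * trace Y)"
    unfolding val_mult by (rule add_mono)
  then show "1 \<le> v (\<beta> * trace Y)" by (simp add: one_ereal_def)
qed

end

text \<open>\<open>r_plus\<close> and \<open>half_r_plus\<close> are the integers with \<open>P\<^bsup>r_plus\<^esup> = P\<^sub>r\<^sub>+\<close> and
  \<open>P\<^bsup>half_r_plus\<^esup> = P\<^sub>(\<^sub>r\<^sub>/\<^sub>2\<^sub>)\<^sub>+\<close>; \<open>unit_char\<close> is the character \<open>\<chi>\<close> of \<open>F\<^sup>\<times>\<close> with \<open>\<phi> = \<chi> \<circ> det\<close>,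
  read through \<open>a \<mapsto> 1 + a\<close> (which coordinate is scaled does not matter).\<close>

locale positive_depth_character =
  residue_field_character v \<psi> S + gl_character \<phi>
  for v :: "'a::field \<Rightarrow> ereal" and \<psi> S and \<phi> :: "'a^'n::finite^'n \<Rightarrow> complex" +
  fixes r :: real and \<alpha>\<^sub>0 :: "'a^'n \<Rightarrow> ereal"
  assumes two_nonzero: "(2::'a) \<noteq> 0"
    and r_pos: "0 < r"
    and building_\<alpha>\<^sub>0: "\<alpha>\<^sub>0 \<in> building v"
    and trivial_on_filt: "\<And>g. g \<in> grp_filt_plus \<alpha>\<^sub>0 r \<Longrightarrow> \<phi> g = 1"
begin

definition r_plus :: int where
  "r_plus = \<lfloor>r\<rfloor> + 1"

definition half_r_plus :: int where
  "half_r_plus = \<lfloor>r / 2\<rfloor> + 1"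

definition unit_char :: "'a \<Rightarrow> complex" where
  "unit_char a = \<phi> (scaling_mat (1 + a) undefined)"

lemma r_plus_bounds:
  shows "r < of_int r_plus" and "1 \<le> half_r_plus" and "half_r_plus \<le> r_plus"
    and "r_plus \<le> 2 * half_r_plus"
proof -
  show "r < of_int r_plus" unfolding r_plus_def by linarith
  show "1 \<le> half_r_plus" unfolding half_r_plus_def using r_pos by simp
  show "half_r_plus \<le> r_plus" unfolding half_r_plus_def r_plus_def using r_pos by (simp add: floor_mono)
  have "real_of_int \<lfloor>r\<rfloor> < real_of_int (2 * (\<lfloor>r / 2\<rfloor> + 1))" by simp linarith
  then show "r_plus \<le> 2 * half_r_plus" unfolding r_plus_def half_r_plus_def by linarith
qed

lemma val_pos_if_ge_half_r_plus: "ereal (of_int half_r_plus) \<le> v a \<Longrightarrow> 0 < v a"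
  using r_plus_bounds(2) by (metis ereal_less(2) less_le_trans of_int_0_less_iff zero_less_one
      order_less_le_trans)

lemma phi_eq_unit_char_det: "invertible A \<Longrightarrow> \<phi> A = unit_char (det A - 1)"
  unfolding unit_char_def using phi_eq_phi_det[OF two_nonzero] by simp

lemma unit_char_trivial:
  assumes u: "ereal (of_int r_plus) \<le> v u"
  shows "unit_char u = 1"
proof -
  obtain Z where Z: "Z \<in> lie_filt \<alpha>\<^sub>0 (of_int r_plus)" "det (mat 1 + Z) = 1 + u"
    using lie_filt_realizes_det[OF building_\<alpha>\<^sub>0 u] by blast
  have "1 + u \<noteq> 0"
    using one_plus_nonzero val_pos_if_ge_half_r_plus u r_plus_bounds(3)
    by (meson ereal_less_eq(3) of_int_le_iff order_trans)
  with Z have "invertible (mat 1 + Z)" by (simp add: invertible_det_nz)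
  with Z r_plus_bounds(1) have "mat 1 + Z \<in> grp_filt_plus \<alpha>\<^sub>0 r"
    unfolding grp_filt_plus_def grp_filt_def by auto
  with trivial_on_filt Z \<open>invertible (mat 1 + Z)\<close> show ?thesis
    using phi_eq_unit_char_det by fastforce
qed

text \<open>\<open>(1 + a)(1 + b) = (1 + a + b)(1 + w)\<close> with \<open>w = ab/(1 + a + b) \<in> P\<^bsup>2 half_r_plus\<^esup> \<subseteq> P\<^bsup>r_plus\<^esup>\<close>.\<close>

lemma unit_char_add:
  assumes a: "ereal (of_int half_r_plus) \<le> v a" and b: "ereal (of_int half_r_plus) \<le> v b"
  shows "unit_char (a + b) = unit_char a * unit_char b"
proof -
  have ab: "ereal (of_int half_r_plus) \<le> v (a + b)" using a b by (rule val_add_ge)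
  have nz: "1 + a \<noteq> 0" "1 + b \<noteq> 0" "1 + (a + b) \<noteq> 0"
    using a b ab by (auto intro!: one_plus_nonzero val_pos_if_ge_half_r_plus)
  define w where "w = a * b / (1 + (a + b))"
  have "ereal (of_int r_plus) \<le> ereal (of_int half_r_plus) + ereal (of_int half_r_plus)"
    using r_plus_bounds(4) by simp
  also have "\<dots> \<le> v a + v b" using a b by (rule add_mono)
  also have "\<dots> = v w"
    unfolding w_def divide_inverse using nz ab
    by (simp add: val_mult val_inverse val_one_plus val_pos_if_ge_half_r_plus)
  finally have w: "ereal (of_int r_plus) \<le> v w" .
  then have "1 + w \<noteq> 0"
    using one_plus_nonzero val_pos_if_ge_half_r_plus r_plus_bounds(3)
    by (meson ereal_less_eq(3) of_int_le_iff order_trans)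
  have "(1 + a) * (1 + b) = (1 + (a + b)) * (1 + w)" unfolding w_def using nz by (simp add: field_simps)
  then have "unit_char a * unit_char b = unit_char (a + b) * unit_char w"
    unfolding unit_char_def using nz \<open>1 + w \<noteq> 0\<close> by (metis phi_scaling_mat_mult)
  with unit_char_trivial[OF w] show ?thesis by simp
qed

lemma unit_char_eq_psi:
  "\<exists>\<beta>. ereal (of_int (1 - r_plus)) \<le> v \<beta> \<and>
     (\<forall>a. ereal (of_int half_r_plus) \<le> v a \<longrightarrow> unit_char a = \<psi> (\<beta> * a))"
  using r_plus_bounds(2,3) unit_char_add unit_char_trivial
  by (intro char_of_ideal_quotient_eq_psi) auto

lemma lie_filt_above_half_depth:
  assumes "\<alpha> \<in> building v" and t: "r / 2 < t" and Y: "Y \<in> lie_filt \<alpha> t"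
  shows "ereal (of_int half_r_plus) \<le> v (trace Y)"
    and "ereal (of_int r_plus) \<le> v (det (mat 1 + Y) - 1 - trace Y)"
proof -
  have "0 \<le> t" using t r_pos by simp
  have "ereal (r / 2) < ereal t" using t by simp
  also have "\<dots> \<le> v (trace Y)" by (rule lie_filt_trace_det(1)[OF assms(1) Y \<open>0 \<le> t\<close>])
  finally have "ereal (r / 2) < v (trace Y)" .
  have "ereal r < ereal (2 * t)" using t by simp
  also have "\<dots> \<le> v (det (mat 1 + Y) - 1 - trace Y)"
    by (rule lie_filt_trace_det(2)[OF assms(1) Y \<open>0 \<le> t\<close>])
  finally have "ereal r < v (det (mat 1 + Y) - 1 - trace Y)" .
  with \<open>ereal (r / 2) < v (trace Y)\<close> show "ereal (of_int half_r_plus) \<le> v (trace Y)"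
    and "ereal (of_int r_plus) \<le> v (det (mat 1 + Y) - 1 - trace Y)"
    unfolding half_r_plus_def r_plus_def by (blast intro: val_gt_imp_ge_floor_plus_one)+
qed

lemma phi_one_plus_lie_filt:
  assumes "\<alpha> \<in> building v" and "r / 2 < t" and "Y \<in> lie_filt \<alpha> t"
  shows "\<phi> (mat 1 + Y) = unit_char (trace Y)"
proof -
  define D where "D = det (mat 1 + Y) - 1 - trace Y"
  have tr: "ereal (of_int half_r_plus) \<le> v (trace Y)" and D: "ereal (of_int r_plus) \<le> v D"
    using lie_filt_above_half_depth[OF assms] unfolding D_def by auto
  have D': "ereal (of_int half_r_plus) \<le> v D"
    using D r_plus_bounds(3) by (simp add: order_trans[rotated])
  have "ereal (of_int half_r_plus) \<le> v (trace Y + D)" using tr D' by (rule val_add_ge)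
  then have "det (mat 1 + Y) \<noteq> 0"
    using one_plus_nonzero val_pos_if_ge_half_r_plus unfolding D_def by fastforce
  then have "\<phi> (mat 1 + Y) = unit_char (det (mat 1 + Y) - 1)"
    by (simp add: phi_eq_unit_char_det invertible_det_nz)
  also have "det (mat 1 + Y) - 1 = trace Y + D" unfolding D_def by simp
  also have "unit_char (trace Y + D) = unit_char (trace Y)"
    using unit_char_add[OF tr D'] unit_char_trivial[OF D] by simp
  finally show ?thesis .
qed

theorem exists_realizing_centre_dual:
  assumes "\<alpha> \<in> building v"
  shows "\<exists>l\<in>centre_dual \<inter> dual_depth v (- r). realizes \<psi> \<phi> \<alpha> r l"
proof -
  obtain \<beta> where \<beta>: "ereal (of_int (1 - r_plus)) \<le> v \<beta>"
    and \<psi>\<beta>: "\<And>a. ereal (of_int half_r_plus) \<le> v a \<Longrightarrow> unit_char a = \<psi> (\<beta> * a)"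
    using unit_char_eq_psi by blast
  define l where "l = (\<lambda>X :: 'a^'n^'n. \<beta> * trace X)"
  have "1 - r_plus = - \<lfloor>r\<rfloor>" unfolding r_plus_def by simp
  with \<beta> have "ereal (of_int (- \<lfloor>r\<rfloor>)) \<le> v \<beta>" by (simp only:)
  then have "l \<in> dual_filt v \<alpha> (- r)"
    unfolding l_def using r_pos by (intro trace_functional_in_dual_filt[OF assms]) simp_all
  with assms have "l \<in> dual_depth v (- r)" unfolding dual_depth_def by (intro UN_I)
  moreover have "l \<in> centre_dual" unfolding centre_dual_def l_def by blast
  moreover have "realizes \<psi> \<phi> \<alpha> r l"
    unfolding realizes_def lie_filt_plus_def l_def
  proof (intro ballI, elim UN_E, simp only: mem_Collect_eq)
    fix Y t assume "r / 2 < t" "Y \<in> lie_filt \<alpha> t"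
    then show "\<phi> (mat 1 + Y) = \<psi> (\<beta> * trace Y)"
      using phi_one_plus_lie_filt[OF assms] \<psi>\<beta> lie_filt_above_half_depth(1)[OF assms] by simp
  qed
  ultimately show ?thesis by blast
qed

end

lemma positive_depth_character_exists:
  fixes \<phi> :: "'a::field^'n::finite^'n \<Rightarrow> complex"
  assumes F: "nonarch_local_field_odd v" and \<psi>: "std_add_char v \<psi>" and \<phi>: "quasichar v \<phi>"
    and depth: "has_depth v \<phi> r" and "0 < r"
  shows "\<exists>S \<alpha>\<^sub>0. positive_depth_character v \<psi> S \<phi> r \<alpha>\<^sub>0"
proof -
  have "disc_val v \<and> v (1 + 1) = 0 \<and>
      (\<exists>S. finite S \<and> S \<subseteq> {a. 0 \<le> v a} \<and> (\<forall>a. 0 \<le> v a \<longrightarrow> (\<exists>s\<in>S. 1 \<le> v (a - s))))"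
    using F unfolding nonarch_local_field_odd_def by (elim conjE) (intro conjI; assumption)
  then obtain S where v: "disc_val v" and v2: "v (1 + 1) = 0"
    and S: "finite S" "S \<subseteq> {a. 0 \<le> v a}" "\<forall>a. 0 \<le> v a \<longrightarrow> (\<exists>s\<in>S. 1 \<le> v (a - s))"
    by (elim conjE exE)
  obtain \<alpha>\<^sub>0 where \<alpha>\<^sub>0: "\<alpha>\<^sub>0 \<in> building v" "\<forall>g\<in>grp_filt_plus \<alpha>\<^sub>0 r. \<phi> g = 1"
    using depth unfolding has_depth_def by (elim conjE bexE)
  interpret discrete_valuation v by (rule discrete_valuation.intro[OF v])
  have "(2::'a) \<noteq> 0"
  proof
    assume "(2::'a) = 0"
    then have "v (1 + 1) = \<infinity>" by (simp add: one_add_one)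
    with v2 show False by simp
  qed
  have "positive_depth_character v \<psi> S \<phi> r \<alpha>\<^sub>0"
  proof unfold_locales
    show "finite S" "\<And>s. s \<in> S \<Longrightarrow> 0 \<le> v s" "\<And>a. 0 \<le> v a \<Longrightarrow> \<exists>s\<in>S. 1 \<le> v (a - s)"
      using S by auto
    show "\<And>a b. \<psi> (a + b) = \<psi> a * \<psi> b" "\<And>a. 1 \<le> v a \<Longrightarrow> \<psi> a = 1" "\<exists>a. 0 \<le> v a \<and> \<psi> a \<noteq> 1"
      using \<psi> unfolding std_add_char_def by blast+
    show "\<And>g h. invertible g \<Longrightarrow> invertible h \<Longrightarrow> \<phi> (g ** h) = \<phi> g * \<phi> h"
      "\<And>g. invertible g \<Longrightarrow> \<phi> g \<noteq> 0"
      using \<phi> unfolding quasichar_def by blast+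
  qed (use \<open>(2::'a) \<noteq> 0\<close> \<open>0 < r\<close> \<alpha>\<^sub>0 in auto)
  then show ?thesis by blast
qed

theorem lemma2p50:
  fixes v :: "'a::field \<Rightarrow> ereal" and \<psi> :: "'a \<Rightarrow> complex"
    and \<phi> :: "'a^'n::finite^'n \<Rightarrow> complex" and r :: real and \<alpha> :: "'a^'n \<Rightarrow> ereal"
  assumes "nonarch_local_field_odd v"
    and "std_add_char v \<psi>"
    and "CARD('n) \<ge> 2"
    and "quasichar v \<phi>"
    and "has_depth v \<phi> r"
    and "0 < r"
    and "\<alpha> \<in> building v"
  shows "\<exists>l\<in>centre_dual \<inter> dual_depth v (- r). realizes \<psi> \<phi> \<alpha> r l"
proof -
  \<comment> \<open>The argument works for every \<open>n \<ge> 1\<close>.\<close>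
  obtain S \<alpha>\<^sub>0 where "positive_depth_character v \<psi> S \<phi> r \<alpha>\<^sub>0"
    using positive_depth_character_exists assms(1,2,4,5,6) by blast
  then interpret positive_depth_character v \<psi> S \<phi> r \<alpha>\<^sub>0 .
  show ?thesis by (rule exists_realizing_centre_dual[OF assms(7)])
qed

end
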